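(* With the conventions $H^{(t)}_0(x)=1$ and $H^{(t)}_m(x)=0$ for $m<0$, for all $n\ge0$, \[ H^{(t)}_{n+1}(x)=x\,H^{(t)}_n(x)-\binom{n}{t}\frac{(t+1)!}{2}\,H^{(t)}_{n-t}(x). \]
   Context: Fix an integer $t\ge1$. A $t$-path in the complete graph $K_n$ (vertices $1,\dots,n$) is a subgraph isomorphic to a path with $t$ edges (on a given set of $t+1$ vertices there are $(t+1)!/2$ of them). The Hermite polynomial of order $t$ is $H^{(t)}_n(x)=\sum_F(-1)^{|F|}x^{\,n-(t+1)|F|}$, the sum over all families $F$ of pairwise vertex-disjoint $t$-paths in $K_n$. *)

theory Defs
  imports "HOL-Computational_Algebra.Polynomial"
begin

text \<open>The complete graph K_n has vertex set {1..n}; an edge is a 2-element set of vertices.\<close>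

definition tpaths :: "nat \<Rightarrow> nat \<Rightarrow> nat set set set" where
  "tpaths t n = {E. \<exists>vs. length vs = t + 1 \<and> distinct vs \<and> set vs \<subseteq> {1..n}
                      \<and> E = {{vs ! i, vs ! (i + 1)} | i. i < t}}"

definition verts :: "nat set set \<Rightarrow> nat set" where
  "verts E = \<Union>E"

definition path_families :: "nat \<Rightarrow> nat \<Rightarrow> nat set set set set" where
  "path_families t n = {F. F \<subseteq> tpaths t n \<and>
      (\<forall>P\<in>F. \<forall>Q\<in>F. P \<noteq> Q \<longrightarrow> verts P \<inter> verts Q = {})}"

definition hermite :: "nat \<Rightarrow> nat \<Rightarrow> int poly" where
  "hermite t n = (\<Sum>F\<in>path_families t n. monom ((-1) ^ card F) (n - (t + 1) * card F))"

definition hermite_ext :: "nat \<Rightarrow> int \<Rightarrow> int poly" where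
  "hermite_ext t m = (if m < 0 then 0 else hermite t (nat m))"

end

theory Submission
  imports Defs "HOL-Combinatorics.Multiset_Permutations"
begin

(*
  Split the families of disjoint t-paths on the vertices {1..n+1} according to whether
  the new vertex a = n+1 is covered. A family avoiding a is a family on {1..n}, and its monomial
  picks up one extra factor x. A family covering a consists of the unique path P through a plus
  a family on the n - t vertices off P, and its term is minus the term of that smaller family.
  There are binom(n,t) choices for the other vertices of P and (t+1)!/2 paths on a fixed
  (t+1)-set, so summing gives the claimed recursion.
*)


section \<open>Paths as edge sets of vertex lists\<close>

fun path_edges :: "'a list \<Rightarrow> 'a set set" where
  "path_edges (a # b # xs) = insert {a, b} (path_edges (b # xs))"
| "path_edges _ = {}"

lemma path_edges_Cons:
  "path_edges (x # xs) = (if xs = [] then {} else insert {x, hd xs} (path_edges xs))"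
  by (cases xs) auto

lemma path_edges_nth: "path_edges vs = {{vs ! i, vs ! (i + 1)} | i. i + 1 < length vs}"
proof (induction vs rule: path_edges.induct)
  case (1 a b xs)
  let ?E = "\<lambda>ys. {{ys ! i, ys ! (i + 1)} | i. i + 1 < length ys}"
  have "?E (a # b # xs) = insert {a, b} (?E (b # xs))"
  proof (intro equalityI subsetI)
    fix e assume "e \<in> ?E (a # b # xs)"
    then obtain i where "e = {(a # b # xs) ! i, (a # b # xs) ! (i + 1)}" "i + 1 < length (a # b # xs)"
      by blast
    then show "e \<in> insert {a, b} (?E (b # xs))" by (cases i) auto
  next
    fix e assume "e \<in> insert {a, b} (?E (b # xs))"
    then consider "e = {a, b}" | j where "e = {(b # xs) ! j, (b # xs) ! (j + 1)}" "j + 1 < length (b # xs)"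
      by blast
    then show "e \<in> ?E (a # b # xs)"
    proof cases
      case 1
      then show ?thesis by (auto intro!: exI[of _ 0])
    next
      case 2
      then show ?thesis by (auto intro!: exI[of _ "Suc j"])
    qed
  qed
  then show ?case using "1.IH" by simp
qed auto

lemma path_edges_append:
  "path_edges (xs @ ys) =
     path_edges xs \<union> path_edges ys \<union> (if xs \<noteq> [] \<and> ys \<noteq> [] then {{last xs, hd ys}} else {})"
  by (induction xs) (auto simp: path_edges_Cons)

lemma path_edges_rev: "path_edges (rev xs) = path_edges xs"
  by (induction xs) (auto simp: path_edges_append path_edges_Cons last_rev insert_commute)

lemma path_edges_map: "path_edges (map f vs) = image f ` path_edges vs"
  by (induction vs) (auto simp: path_edges_Cons hd_map)

lemma path_edge_subset: "e \<in> path_edges vs \<Longrightarrow> e \<subseteq> set vs"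
  by (induction vs) (auto simp: path_edges_Cons split: if_splits)

lemma Union_path_edges: "length vs \<ge> 2 \<Longrightarrow> \<Union>(path_edges vs) = set vs"
proof (induction vs rule: path_edges.induct)
  case (1 a b xs)
  then show ?case by (cases xs) auto
qed auto

lemma first_vertex_edge:
  "distinct (a # b # r) \<Longrightarrow> e \<in> path_edges (a # b # r) \<Longrightarrow> a \<in> e \<Longrightarrow> e = {a, b}"
  using path_edge_subset[of e "b # r"] by auto

lemma first_vertex_is_endpoint:
  assumes dv: "distinct (a # b # r)" and dw: "distinct ws"
    and same: "path_edges ws = path_edges (a # b # r)"
  shows "hd ws = a \<or> last ws = a"
proof -
  have "a \<in> \<Union>(path_edges ws)" using same Union_path_edges[of "a # b # r"] by simp
  then have "a \<in> set ws" using path_edge_subset by blast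
  then obtain xs ys where ws: "ws = xs @ a # ys" by (metis split_list)
  have "xs = [] \<or> ys = []"
  proof (rule ccontr)
    assume "\<not> (xs = [] \<or> ys = [])"
    then have ne: "xs \<noteq> []" "ys \<noteq> []" by auto
    have "{last xs, a} \<in> path_edges ws" "{a, hd ys} \<in> path_edges ws"
      using ws ne by (simp_all add: path_edges_append path_edges_Cons)
    then have left: "{last xs, a} \<in> path_edges (a # b # r)"
      and right: "{a, hd ys} \<in> path_edges (a # b # r)"
      by (simp_all only: same)
    have "{last xs, a} = {a, b}" by (rule first_vertex_edge[OF dv left]) simp
    moreover have "{a, hd ys} = {a, b}" by (rule first_vertex_edge[OF dv right]) simp
    moreover have "a \<noteq> b" using dv by simp
    ultimately have "last xs = hd ys" by (metis doubleton_eq_iff)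
    moreover have "last xs \<in> set xs" "hd ys \<in> set ys" using ne by auto
    ultimately show False using dw ws by auto
  qed
  then show ?thesis using ws by auto
qed

lemma path_edges_same_start:
  "distinct vs \<Longrightarrow> distinct ws \<Longrightarrow> length vs \<ge> 2 \<Longrightarrow> path_edges ws = path_edges vs
   \<Longrightarrow> hd ws = hd vs \<Longrightarrow> ws = vs"
proof (induction vs arbitrary: ws rule: path_edges.induct)
  case (1 a b r)
  have "path_edges ws \<noteq> {}" using "1.prems"(4) by simp
  then obtain c zs where ws: "ws = a # c # zs"
    using "1.prems"(5) by (cases ws rule: path_edges.cases) auto
  have "{a, c} \<in> path_edges ws" using ws by simp
  then have "{a, c} \<in> path_edges (a # b # r)" by (simp only: "1.prems"(4))
  then have "{a, c} = {a, b}" by (rule first_vertex_edge[OF "1.prems"(1)]) simp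
  moreover have "a \<noteq> b" using "1.prems"(1) by simp
  ultimately have cb: "c = b" by (metis doubleton_eq_iff)
  have tail: "path_edges (b # zs) = path_edges (b # r)"
  proof -
    have "{a, b} \<notin> path_edges (b # zs)" "{a, b} \<notin> path_edges (b # r)"
      using path_edge_subset[of "{a, b}" "b # zs"] path_edge_subset[of "{a, b}" "b # r"]
        "1.prems"(1,2) ws cb by auto
    then show ?thesis using "1.prems"(4) ws cb by (simp add: insert_ident)
  qed
  show ?case
  proof (cases "r = []")
    case True
    then have "zs = []" using tail by (cases zs) auto
    then show ?thesis using ws cb True by simp
  next
    case False
    then have "b # zs = b # r"
      using "1.IH"[of "b # zs"] "1.prems"(1,2) tail ws cb by (cases r) auto
    then show ?thesis using ws cb by simp
  qed
qed auto

lemma path_edges_inj_up_to_rev: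
  assumes "distinct vs" "distinct ws" "length vs \<ge> 2" "path_edges ws = path_edges vs"
  shows "ws = vs \<or> ws = rev vs"
proof -
  obtain a b r where vs: "vs = a # b # r" using assms(3) by (cases vs rule: path_edges.cases) auto
  have "hd ws = hd vs \<or> hd (rev ws) = hd vs"
    using first_vertex_is_endpoint[of a b r ws] assms vs by (auto simp: hd_rev)
  moreover have "path_edges (rev ws) = path_edges vs" "distinct (rev ws)"
    using assms by (simp_all add: path_edges_rev)
  ultimately show ?thesis
    using path_edges_same_start[of vs ws] path_edges_same_start[of vs "rev ws"] assms by auto
qed

lemma distinct_neq_rev:
  assumes "distinct vs" "length vs \<ge> 2"
  shows "vs \<noteq> rev vs"
proof
  assume "vs = rev vs"
  then have "hd vs = last vs" by (metis hd_rev)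
  moreover obtain x y zs where "vs = x # y # zs" using assms(2) by (cases vs rule: path_edges.cases) auto
  ultimately show False using assms(1) last_in_set[of "y # zs"] by auto
qed

text \<open>A set U of at least two vertices carries exactly card U! / 2 paths through all of its
  vertices: every such path comes from exactly two orderings of U.\<close>

lemma card_spanning_paths:
  assumes U: "finite U" "card U \<ge> 2"
  shows "card (path_edges ` permutations_of_set U) = fact (card U) div 2"
proof -
  let ?L = "permutations_of_set U"
  have fiber: "{ws \<in> ?L. path_edges ws = E} = {vs, rev vs}" if vs: "vs \<in> ?L" "E = path_edges vs"
    for vs E
  proof -
    have "distinct vs" "length vs = card U" using vs(1) distinct_card[of vs]
      by (auto simp: permutations_of_set_def)
    moreover have "length ws = card U" if "ws \<in> ?L" for ws
      using that distinct_card[of ws] by (auto simp: permutations_of_set_def)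
    ultimately show ?thesis
      using vs U path_edges_inj_up_to_rev[of vs]
      by (auto simp: permutations_of_set_def path_edges_rev)
  qed
  have two: "card {ws \<in> ?L. path_edges ws = E} = 2" if E: "E \<in> path_edges ` ?L" for E
  proof -
    obtain vs where vs: "vs \<in> ?L" "E = path_edges vs" using E by blast
    have "distinct vs" "length vs = card U" using vs(1) distinct_card[of vs]
      by (auto simp: permutations_of_set_def)
    then have "vs \<noteq> rev vs" using distinct_neq_rev U by metis
    then show ?thesis using fiber[OF vs] by simp
  qed
  have fibers: "?L = (\<Union>E\<in>path_edges ` ?L. {ws \<in> ?L. path_edges ws = E})" by auto
  have "card ?L = (\<Sum>E\<in>path_edges ` ?L. card {ws \<in> ?L. path_edges ws = E})"
    by (subst fibers, rule card_UN_disjoint) auto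
  also have "\<dots> = 2 * card (path_edges ` ?L)" using two by simp
  finally show ?thesis using U by simp
qed


section \<open>Hermite polynomials of an arbitrary finite vertex set\<close>

definition paths_on :: "nat \<Rightarrow> 'a set \<Rightarrow> 'a set set set" where
  "paths_on t V = {path_edges vs | vs. length vs = t + 1 \<and> distinct vs \<and> set vs \<subseteq> V}"

definition path_families_on :: "nat \<Rightarrow> 'a set \<Rightarrow> 'a set set set set" where
  "path_families_on t V =
     {F. F \<subseteq> paths_on t V \<and> (\<forall>P\<in>F. \<forall>Q\<in>F. P \<noteq> Q \<longrightarrow> \<Union>P \<inter> \<Union>Q = {})}"

definition hermite_on :: "nat \<Rightarrow> 'a set \<Rightarrow> int poly" where
  "hermite_on t V =
     (\<Sum>F\<in>path_families_on t V. monom ((-1) ^ card F) (card V - (t + 1) * card F))"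

lemma tpaths_eq_paths_on: "tpaths t n = paths_on t {1..n}"
proof -
  have "(length vs = t + 1 \<and> distinct vs \<and> set vs \<subseteq> {1..n} \<and> E = {{vs ! i, vs ! (i + 1)} | i. i < t})
    \<longleftrightarrow> (E = path_edges vs \<and> length vs = t + 1 \<and> distinct vs \<and> set vs \<subseteq> {1..n})"
    for E and vs :: "nat list"
    by (auto simp: path_edges_nth)
  then show ?thesis unfolding tpaths_def paths_on_def by (simp only:)
qed

lemma hermite_eq_hermite_on: "hermite t n = hermite_on t {1..n}"
  unfolding hermite_def hermite_on_def path_families_def path_families_on_def
    tpaths_eq_paths_on verts_def by simp

lemma paths_onE:
  assumes "t \<ge> 1" "P \<in> paths_on t V"
  obtains vs where "P = path_edges vs" "length vs = t + 1" "distinct vs" "set vs \<subseteq> V"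
    "\<Union>P = set vs"
proof -
  obtain vs where vs: "P = path_edges vs" "length vs = t + 1" "distinct vs" "set vs \<subseteq> V"
    using assms(2) unfolding paths_on_def by blast
  moreover have "\<Union>P = set vs" using vs(1,2) assms(1) Union_path_edges[of vs] by simp
  ultimately show ?thesis using that by blast
qed

lemma path_vertices_subset: "t \<ge> 1 \<Longrightarrow> P \<in> paths_on t V \<Longrightarrow> \<Union>P \<subseteq> V"
  by (erule paths_onE) auto

lemma card_path_vertices: "t \<ge> 1 \<Longrightarrow> P \<in> paths_on t V \<Longrightarrow> card (\<Union>P) = t + 1"
  by (erule paths_onE) (auto simp: distinct_card)

lemma finite_path_vertices: "t \<ge> 1 \<Longrightarrow> P \<in> paths_on t V \<Longrightarrow> finite (\<Union>P)"
  by (erule paths_onE) auto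

lemma paths_on_restrict:
  assumes "t \<ge> 1" "P \<in> paths_on t V" "\<Union>P \<subseteq> W"
  shows "P \<in> paths_on t W"
proof -
  obtain vs where vs: "P = path_edges vs" "length vs = t + 1" "distinct vs" "\<Union>P = set vs"
    using paths_onE[OF assms(1,2)] by metis
  then have "set vs \<subseteq> W" using assms(3) by simp
  then show ?thesis using vs unfolding paths_on_def by blast
qed

lemma paths_on_mono: "V \<subseteq> W \<Longrightarrow> paths_on t V \<subseteq> paths_on t W"
  unfolding paths_on_def by blast

lemma finite_paths_on: "finite V \<Longrightarrow> finite (paths_on t V)"
proof -
  assume V: "finite V"
  have "paths_on t V \<subseteq> path_edges ` {vs. set vs \<subseteq> V \<and> length vs = t + 1}"
    unfolding paths_on_def by blast
  then show ?thesis using finite_lists_length_eq[OF V] finite_subset by blast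
qed

lemma finite_path_families_on: "finite V \<Longrightarrow> finite (path_families_on t V)"
proof -
  assume "finite V"
  moreover have "path_families_on t V \<subseteq> Pow (paths_on t V)" unfolding path_families_on_def by blast
  ultimately show ?thesis using finite_paths_on by (metis finite_Pow_iff finite_subset)
qed

lemma finite_path_family: "finite V \<Longrightarrow> F \<in> path_families_on t V \<Longrightarrow> finite F"
  using finite_paths_on[of V t] unfolding path_families_on_def by (auto intro: finite_subset)

lemma family_vertices_subset:
  assumes t: "t \<ge> 1" and "F \<in> path_families_on t V" "Q \<in> F"
  shows "\<Union>Q \<subseteq> V"
proof -
  have "Q \<in> paths_on t V" using assms(2,3) unfolding path_families_on_def by blast
  then show ?thesis by (rule path_vertices_subset[OF t])
qed

text \<open>The paths of a family occupy (t + 1) card F distinct vertices, so the exponents in the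
  Hermite sum are never truncated.\<close>

lemma family_size_bound:
  assumes t: "t \<ge> 1" and V: "finite V" and F: "F \<in> path_families_on t V"
  shows "(t + 1) * card F \<le> card V"
proof -
  have Fs: "F \<subseteq> paths_on t V" and dis: "\<forall>P\<in>F. \<forall>Q\<in>F. P \<noteq> Q \<longrightarrow> \<Union>P \<inter> \<Union>Q = {}"
    using F unfolding path_families_on_def by auto
  have "\<forall>P\<in>F. finite (\<Union>P)" using Fs finite_path_vertices[OF t] by blast
  then have "card (\<Union>P\<in>F. \<Union>P) = (\<Sum>P\<in>F. card (\<Union>P))"
    using finite_path_family[OF V F] dis by (intro card_UN_disjoint) auto
  also have "\<dots> = (\<Sum>P\<in>F. t + 1)"
    using Fs card_path_vertices[OF t] by (intro sum.cong) auto
  also have "\<dots> = (t + 1) * card F" by simp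
  finally have "card (\<Union>P\<in>F. \<Union>P) = (t + 1) * card F" .
  moreover have "(\<Union>P\<in>F. \<Union>P) \<subseteq> V" using Fs path_vertices_subset[OF t] by blast
  ultimately show ?thesis using card_mono[OF V] by metis
qed


subsection \<open>Invariance under relabelling of the vertices\<close>

lemma paths_on_image:
  assumes t: "t \<ge> 1" and f: "inj_on f V" "f ` V \<subseteq> W" and P: "P \<in> paths_on t V"
  shows "image f ` P \<in> paths_on t W"
proof -
  obtain vs where vs: "P = path_edges vs" "length vs = t + 1" "distinct vs" "set vs \<subseteq> V"
    using paths_onE[OF t P] by metis
  have "distinct (map f vs)" using vs f inj_on_subset distinct_map by metis
  moreover have "set (map f vs) \<subseteq> W" using vs f by auto
  moreover have "image f ` P = path_edges (map f vs)" using vs(1) by (simp add: path_edges_map)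
  ultimately show ?thesis unfolding paths_on_def using vs(2) by (intro CollectI exI[of _ "map f vs"]) simp
qed

lemma path_families_on_image:
  assumes t: "t \<ge> 1" and f: "inj_on f V" "f ` V \<subseteq> W" and F: "F \<in> path_families_on t V"
  shows "image (image f) ` F \<in> path_families_on t W"
proof -
  have Fs: "F \<subseteq> paths_on t V" and dis: "\<forall>P\<in>F. \<forall>Q\<in>F. P \<noteq> Q \<longrightarrow> \<Union>P \<inter> \<Union>Q = {}"
    using F unfolding path_families_on_def by auto
  have "\<Union>(image f ` P) \<inter> \<Union>(image f ` Q) = {}" if "P \<in> F" "Q \<in> F" "image f ` P \<noteq> image f ` Q"
    for P Q
  proof -
    have "\<Union>P \<inter> \<Union>Q = {}" using dis that by metis
    moreover have "\<Union>P \<subseteq> V" "\<Union>Q \<subseteq> V" using that Fs path_vertices_subset[OF t] by blast+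
    ultimately have "f ` \<Union>P \<inter> f ` \<Union>Q = {}" using f(1) by (metis image_empty inj_on_image_Int)
    then show ?thesis by (simp add: image_Union)
  qed
  moreover have "image (image f) ` F \<subseteq> paths_on t W" using Fs paths_on_image[OF t f] by blast
  ultimately show ?thesis unfolding path_families_on_def by blast
qed

lemma relabel_cancel:
  assumes "\<And>x. x \<in> \<Union>P \<Longrightarrow> g (f x) = x"
  shows "image g ` image f ` P = P"
proof -
  have "g ` f ` e = e" if "e \<in> P" for e
  proof -
    have "g ` f ` e = (\<lambda>x. g (f x)) ` e" by (simp add: image_image)
    also have "\<dots> = id ` e" using assms that by (intro image_cong) auto
    finally show ?thesis by simp
  qed
  then show ?thesis by (simp add: image_image)
qed

lemma hermite_on_bij:
  assumes t: "t \<ge> 1" and f: "bij_betw f V W"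
  shows "hermite_on t V = hermite_on t W"
proof -
  let ?g = "inv_into V f"
  have g: "bij_betw ?g W V" using f by (rule bij_betw_inv_into)
  have fi: "inj_on f V" "f ` V \<subseteq> W" and gi: "inj_on ?g W" "?g ` W \<subseteq> V"
    using f g by (auto simp: bij_betw_def)
  let ?h = "image (image (image f))" and ?h' = "image (image (image ?g))"
  have cancel_V: "image ?g ` image f ` P = P" if "P \<in> paths_on t V" for P
    using path_vertices_subset[OF t that] fi(1) by (intro relabel_cancel) auto
  have cancel_W: "image f ` image ?g ` P = P" if "P \<in> paths_on t W" for P
    using path_vertices_subset[OF t that] f by (intro relabel_cancel) (auto simp: bij_betw_def f_inv_into_f)
  have bij: "bij_betw ?h (path_families_on t V) (path_families_on t W)"
  proof (rule bij_betw_byWitness[where f' = ?h'])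
    show "\<forall>F\<in>path_families_on t V. ?h' (?h F) = F"
      using cancel_V unfolding path_families_on_def by (simp add: image_image subset_iff)
    show "\<forall>F\<in>path_families_on t W. ?h (?h' F) = F"
      using cancel_W unfolding path_families_on_def by (simp add: image_image subset_iff)
    show "?h ` path_families_on t V \<subseteq> path_families_on t W"
      "?h' ` path_families_on t W \<subseteq> path_families_on t V"
      using path_families_on_image[OF t fi] path_families_on_image[OF t gi] by blast+
  qed
  have card_h: "card (?h F) = card F" if "F \<in> path_families_on t V" for F
  proof -
    have "F \<subseteq> paths_on t V" using that unfolding path_families_on_def by simp
    then have "inj_on (image (image f)) F"
      by (intro inj_on_inverseI[where g = "image (image ?g)"]) (use cancel_V in blast)
    then show ?thesis by (rule card_image)
  qed
  have card_W: "card W = card V" using f bij_betw_same_card by metis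
  have "hermite_on t W =
      (\<Sum>F\<in>path_families_on t W. monom ((-1) ^ card F) (card W - (t + 1) * card F))"
    unfolding hermite_on_def ..
  also have "\<dots> =
      (\<Sum>F\<in>path_families_on t V. monom ((-1) ^ card (?h F)) (card W - (t + 1) * card (?h F)))"
    by (rule sum.reindex_bij_betw[OF bij, symmetric])
  also have "\<dots> = hermite_on t V"
    unfolding hermite_on_def using card_h card_W by (intro sum.cong) simp_all
  finally show ?thesis by simp
qed

lemma hermite_on_eq_hermite:
  assumes t: "t \<ge> 1" and V: "finite V"
  shows "hermite_on t V = hermite t (card V)"
proof -
  obtain f where "bij_betw f V {1..card V}" using finite_same_card_bij[OF V, of "{1..card V}"] by auto
  then have "hermite_on t V = hermite_on t {1..card V}" by (rule hermite_on_bij[OF t])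
  then show ?thesis by (simp add: hermite_eq_hermite_on)
qed


section \<open>Adding a vertex\<close>

text \<open>Paths through a new vertex a: choose the other t vertices, then a path on the t + 1
  chosen vertices.\<close>

lemma paths_with_vertex_set:
  assumes t: "t \<ge> 1" and U: "U \<subseteq> V" "finite U" "card U = t + 1"
  shows "{P \<in> paths_on t V. \<Union>P = U} = path_edges ` permutations_of_set U"
proof (intro equalityI subsetI)
  fix P assume "P \<in> {P \<in> paths_on t V. \<Union>P = U}"
  then have P: "P \<in> paths_on t V" "\<Union>P = U" by auto
  obtain vs where "P = path_edges vs" "distinct vs" "\<Union>P = set vs"
    using paths_onE[OF t P(1)] by metis
  then show "P \<in> path_edges ` permutations_of_set U"
    using P(2) by (auto simp: permutations_of_set_def)
next
  fix P assume "P \<in> path_edges ` permutations_of_set U"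
  then obtain vs where vs: "P = path_edges vs" "distinct vs" "set vs = U"
    by (auto simp: permutations_of_set_def)
  have "length vs = t + 1" using vs U distinct_card by metis
  then have "P \<in> paths_on t V" "\<Union>P = U"
    using vs U t Union_path_edges[of vs] unfolding paths_on_def by auto
  then show "P \<in> {P \<in> paths_on t V. \<Union>P = U}" by simp
qed

lemma card_paths_through:
  assumes t: "t \<ge> 1" and V: "finite V" and a: "a \<notin> V"
  shows "card {P \<in> paths_on t (insert a V). a \<in> \<Union>P} = (card V choose t) * (fact (t + 1) div 2)"
proof -
  let ?S = "{S. S \<subseteq> V \<and> card S = t}"
  let ?A = "\<lambda>S. {P \<in> paths_on t (insert a V). \<Union>P = insert a S}"
  have split: "{P \<in> paths_on t (insert a V). a \<in> \<Union>P} = (\<Union>S\<in>?S. ?A S)"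
  proof (intro equalityI subsetI)
    fix P assume "P \<in> {P \<in> paths_on t (insert a V). a \<in> \<Union>P}"
    then have P: "P \<in> paths_on t (insert a V)" "a \<in> \<Union>P" by auto
    have "\<Union>P - {a} \<subseteq> V" using path_vertices_subset[OF t P(1)] by blast
    moreover have "card (\<Union>P - {a}) = t"
      using card_path_vertices[OF t P(1)] finite_path_vertices[OF t P(1)] P(2) by simp
    moreover have "\<Union>P = insert a (\<Union>P - {a})" using P(2) by blast
    ultimately show "P \<in> (\<Union>S\<in>?S. ?A S)" using P(1) by blast
  qed auto
  have card_A: "card (?A S) = fact (t + 1) div 2" if "S \<in> ?S" for S
  proof -
    have S: "S \<subseteq> V" "card S = t" using that by auto
    have "finite S" using S V finite_subset by blast
    moreover have "a \<notin> S" using S a by blast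
    ultimately have U: "finite (insert a S)" "card (insert a S) = t + 1" using S by simp_all
    have "?A S = path_edges ` permutations_of_set (insert a S)"
      by (rule paths_with_vertex_set[OF t]) (use S U in auto)
    then show ?thesis using card_spanning_paths[of "insert a S"] U t by simp
  qed
  have "card (\<Union>S\<in>?S. ?A S) = (\<Sum>S\<in>?S. card (?A S))"
  proof (rule card_UN_disjoint)
    show "finite ?S" using V by simp
    show "\<forall>S\<in>?S. finite (?A S)" using finite_paths_on[of "insert a V" t] V by auto
    show "\<forall>S\<in>?S. \<forall>S'\<in>?S. S \<noteq> S' \<longrightarrow> ?A S \<inter> ?A S' = {}"
    proof (intro ballI impI)
      fix S S' assume "S \<in> ?S" "S' \<in> ?S" "S \<noteq> S'"
      moreover have "a \<notin> S" "a \<notin> S'" using \<open>S \<in> ?S\<close> \<open>S' \<in> ?S\<close> a by auto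
      ultimately have "insert a S \<noteq> insert a S'" using insert_ident by metis
      then show "?A S \<inter> ?A S' = {}" by blast
    qed
  qed
  also have "\<dots> = (card V choose t) * (fact (t + 1) div 2)"
    using card_A n_subsets[OF V] by simp
  finally show ?thesis using split by simp
qed

lemma families_avoiding:
  assumes t: "t \<ge> 1" and a: "a \<notin> V"
  shows "{F \<in> path_families_on t (insert a V). \<forall>P\<in>F. a \<notin> \<Union>P} = path_families_on t V"
proof -
  have "P \<in> paths_on t V \<longleftrightarrow> P \<in> paths_on t (insert a V) \<and> a \<notin> \<Union>P" for P
  proof
    assume P: "P \<in> paths_on t V"
    then show "P \<in> paths_on t (insert a V) \<and> a \<notin> \<Union>P"
      using path_vertices_subset[OF t P] paths_on_mono[of V "insert a V" t] a by blast
  next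
    assume P: "P \<in> paths_on t (insert a V) \<and> a \<notin> \<Union>P"
    then have "\<Union>P \<subseteq> V" using path_vertices_subset[OF t, of P "insert a V"] by blast
    then show "P \<in> paths_on t V" using paths_on_restrict[OF t] P by blast
  qed
  then have "F \<subseteq> paths_on t V \<longleftrightarrow> F \<subseteq> paths_on t (insert a V) \<and> (\<forall>P\<in>F. a \<notin> \<Union>P)" for F
    by blast
  then show ?thesis unfolding path_families_on_def by auto
qed

lemma families_covering:
  assumes t: "t \<ge> 1" and a: "a \<notin> V"
  shows "{F \<in> path_families_on t (insert a V). \<exists>P\<in>F. a \<in> \<Union>P} =
           (\<Union>P\<in>{P \<in> paths_on t (insert a V). a \<in> \<Union>P}. insert P ` path_families_on t (V - \<Union>P))"
proof (intro equalityI subsetI)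
  fix F assume F: "F \<in> {F \<in> path_families_on t (insert a V). \<exists>P\<in>F. a \<in> \<Union>P}"
  then obtain P where P: "P \<in> F" "a \<in> \<Union>P" by blast
  have Fs: "F \<subseteq> paths_on t (insert a V)" and dis: "\<forall>P\<in>F. \<forall>Q\<in>F. P \<noteq> Q \<longrightarrow> \<Union>P \<inter> \<Union>Q = {}"
    using F unfolding path_families_on_def by auto
  have "Q \<in> paths_on t (V - \<Union>P)" if "Q \<in> F - {P}" for Q
  proof -
    have "\<Union>Q \<subseteq> V - \<Union>P"
      using dis that P Fs path_vertices_subset[OF t, of Q "insert a V"] by blast
    moreover have "Q \<in> paths_on t (insert a V)" using that Fs by blast
    ultimately show ?thesis using paths_on_restrict[OF t] by blast
  qed
  then have "F - {P} \<in> path_families_on t (V - \<Union>P)" using dis unfolding path_families_on_def by blast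
  moreover have "F = insert P (F - {P})" using P by blast
  ultimately show "F \<in> (\<Union>P\<in>{P \<in> paths_on t (insert a V). a \<in> \<Union>P}. insert P ` path_families_on t (V - \<Union>P))"
    using P Fs by blast
next
  fix F assume "F \<in> (\<Union>P\<in>{P \<in> paths_on t (insert a V). a \<in> \<Union>P}. insert P ` path_families_on t (V - \<Union>P))"
  then obtain P F1 where P: "P \<in> paths_on t (insert a V)" "a \<in> \<Union>P"
    and F1: "F1 \<in> path_families_on t (V - \<Union>P)" and F: "F = insert P F1" by blast
  have dis1: "\<forall>R\<in>F1. \<forall>Q\<in>F1. R \<noteq> Q \<longrightarrow> \<Union>R \<inter> \<Union>Q = {}"
    and F1s: "F1 \<subseteq> paths_on t (V - \<Union>P)"
    using F1 unfolding path_families_on_def by auto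
  have "F \<subseteq> paths_on t (insert a V)"
    using F1s paths_on_mono[of "V - \<Union>P" "insert a V" t] F P(1) by blast
  moreover have sep: "\<Union>Q \<inter> \<Union>P = {}" if "Q \<in> F1" for Q
    using family_vertices_subset[OF t F1 that] by blast
  have "\<Union>R \<inter> \<Union>Q = {}" if "R \<in> F" "Q \<in> F" "R \<noteq> Q" for R Q
    using that sep dis1 F by (metis Int_commute insert_iff)
  ultimately have "F \<in> path_families_on t (insert a V)" unfolding path_families_on_def by simp
  then show "F \<in> {F \<in> path_families_on t (insert a V). \<exists>P\<in>F. a \<in> \<Union>P}"
    using F P(2) by blast
qed

lemma sum_families_containing:
  assumes t: "t \<ge> 1" and V: "finite V" and a: "a \<notin> V"
    and P: "P \<in> paths_on t (insert a V)" "a \<in> \<Union>P"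
  shows "(\<Sum>F\<in>insert P ` path_families_on t (V - \<Union>P).
            monom ((-1::int) ^ card F) (Suc (card V) - (t + 1) * card F))
         = - hermite t (card V - t)"
proof -
  let ?W = "V - \<Union>P"
  have card_W: "card ?W = card V - t"
  proof -
    have "V \<inter> \<Union>P = \<Union>P - {a}" using path_vertices_subset[OF t P(1)] a by blast
    then have "card (V \<inter> \<Union>P) = t"
      using card_path_vertices[OF t P(1)] finite_path_vertices[OF t P(1)] P(2) by simp
    then show ?thesis using V by (simp add: card_Diff_subset_Int)
  qed
  have notin: "P \<notin> F1" if "F1 \<in> path_families_on t ?W" for F1
    using family_vertices_subset[OF t that] P(2) a by blast
  have inj: "inj_on (insert P) (path_families_on t ?W)"
    by (rule inj_onI) (metis notin insert_ident)
  have shifted_term: "monom ((-1::int) ^ card (insert P F1)) (Suc (card V) - (t + 1) * card (insert P F1))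
      = - monom ((-1) ^ card F1) (card ?W - (t + 1) * card F1)"
    if F1: "F1 \<in> path_families_on t ?W" for F1
  proof -
    have "card (insert P F1) = Suc (card F1)"
      using finite_path_family[OF _ F1] V notin[OF F1] by simp
    moreover have "(t + 1) * Suc (card F1) = t + 1 + (t + 1) * card F1" by simp
    then have "Suc (card V) - (t + 1) * Suc (card F1) = card ?W - (t + 1) * card F1"
      unfolding card_W by simp
    ultimately show ?thesis by (simp add: minus_monom)
  qed
  have "(\<Sum>F\<in>insert P ` path_families_on t ?W.
            monom ((-1::int) ^ card F) (Suc (card V) - (t + 1) * card F))
      = (\<Sum>F1\<in>path_families_on t ?W.
            monom ((-1::int) ^ card (insert P F1)) (Suc (card V) - (t + 1) * card (insert P F1)))"
    by (rule sum.reindex[OF inj, unfolded comp_def])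
  also have "\<dots> = (\<Sum>F1\<in>path_families_on t ?W. - monom ((-1) ^ card F1) (card ?W - (t + 1) * card F1))"
    using shifted_term by (rule sum.cong[OF refl])
  also have "\<dots> = - hermite_on t ?W" unfolding hermite_on_def by (simp add: sum_negf)
  also have "\<dots> = - hermite t (card V - t)"
    using hermite_on_eq_hermite[OF t, of ?W] V card_W by simp
  finally show ?thesis .
qed

text \<open>Families avoiding the new vertex contribute x times the Hermite polynomial of V: the
  vertex count grows by one while the family stays the same.\<close>

lemma sum_families_avoiding:
  assumes t: "t \<ge> 1" and V: "finite V"
  shows "(\<Sum>F\<in>path_families_on t V. monom ((-1::int) ^ card F) (Suc (card V) - (t + 1) * card F))
         = [:0, 1:] * hermite_on t V"
proof -
  have "(\<Sum>F\<in>path_families_on t V. monom ((-1::int) ^ card F) (Suc (card V) - (t + 1) * card F))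
      = (\<Sum>F\<in>path_families_on t V. [:0, 1:] * monom ((-1) ^ card F) (card V - (t + 1) * card F))"
  proof (rule sum.cong[OF refl])
    fix F assume "F \<in> path_families_on t V"
    then have "Suc (card V) - (t + 1) * card F = Suc (card V - (t + 1) * card F)"
      using family_size_bound[OF t V] by (simp add: Suc_diff_le)
    then show "monom ((-1::int) ^ card F) (Suc (card V) - (t + 1) * card F)
        = [:0, 1:] * monom ((-1::int) ^ card F) (card V - (t + 1) * card F)"
      by (simp add: monom_Suc)
  qed
  then show ?thesis unfolding hermite_on_def by (simp add: sum_distrib_left)
qed

lemma sum_families_covering:
  assumes t: "t \<ge> 1" and V: "finite V" and a: "a \<notin> V"
  shows "(\<Sum>F\<in>{F \<in> path_families_on t (insert a V). \<exists>P\<in>F. a \<in> \<Union>P}.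
            monom ((-1::int) ^ card F) (Suc (card V) - (t + 1) * card F))
         = - (of_nat (card {P \<in> paths_on t (insert a V). a \<in> \<Union>P}) * hermite t (card V - t))"
proof -
  let ?T = "\<lambda>F. monom ((-1::int) ^ card F) (Suc (card V) - (t + 1) * card F)"
  let ?Pa = "{P \<in> paths_on t (insert a V). a \<in> \<Union>P}"
  have disjoint: "insert P ` path_families_on t (V - \<Union>P) \<inter> insert Q ` path_families_on t (V - \<Union>Q) = {}"
    if "P \<in> ?Pa" "Q \<in> ?Pa" "P \<noteq> Q" for P Q
  proof -
    have "Q \<notin> F1" if "F1 \<in> path_families_on t (V - \<Union>P)" for F1
      using family_vertices_subset[OF t that] \<open>Q \<in> ?Pa\<close> a by blast
    then show ?thesis using \<open>P \<noteq> Q\<close> by blast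
  qed
  have "sum ?T {F \<in> path_families_on t (insert a V). \<exists>P\<in>F. a \<in> \<Union>P}
      = (\<Sum>P\<in>?Pa. sum ?T (insert P ` path_families_on t (V - \<Union>P)))"
    unfolding families_covering[OF t a]
    using finite_paths_on[of "insert a V" t] V disjoint
    by (intro sum.UNION_disjoint) (auto intro: finite_path_families_on)
  also have "\<dots> = (\<Sum>P\<in>?Pa. - hermite t (card V - t))"
    using sum_families_containing[OF t V a] by (intro sum.cong) auto
  also have "\<dots> = - (of_nat (card ?Pa) * hermite t (card V - t))" by simp
  finally show ?thesis .
qed

lemma hermite_on_insert:
  assumes t: "t \<ge> 1" and V: "finite V" and a: "a \<notin> V"
  shows "hermite_on t (insert a V) = [:0, 1:] * hermite_on t V
     - of_nat (card {P \<in> paths_on t (insert a V). a \<in> \<Union>P}) * hermite t (card V - t)"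
proof -
  let ?T = "\<lambda>F. monom ((-1::int) ^ card F) (Suc (card V) - (t + 1) * card F)"
  let ?A = "{F \<in> path_families_on t (insert a V). \<forall>P\<in>F. a \<notin> \<Union>P}"
  let ?B = "{F \<in> path_families_on t (insert a V). \<exists>P\<in>F. a \<in> \<Union>P}"
  have card_insert: "card (insert a V) = Suc (card V)" using V a by simp
  have split_families: "path_families_on t (insert a V) = ?A \<union> ?B" by blast
  have "hermite_on t (insert a V) = sum ?T (?A \<union> ?B)"
    unfolding hermite_on_def card_insert split_families[symmetric] ..
  also have "\<dots> = sum ?T ?A + sum ?T ?B"
    using finite_path_families_on[of "insert a V" t] V by (intro sum.union_disjoint) auto
  also have "\<dots> = [:0, 1:] * hermite_on t V + sum ?T ?B"
    unfolding families_avoiding[OF t a] sum_families_avoiding[OF t V] ..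
  also have "\<dots> = [:0, 1:] * hermite_on t V
      - of_nat (card {P \<in> paths_on t (insert a V). a \<in> \<Union>P}) * hermite t (card V - t)"
    unfolding sum_families_covering[OF t V a] by simp
  finally show ?thesis .
qed

text \<open>With the convention H_m = 0 for m < 0 the last term needs no case distinction, since the
  binomial coefficient vanishes exactly when n < t.\<close>

lemma smult_hermite_ext:
  "of_nat ((n choose t) * c) * hermite t (n - t)
     = smult (of_nat ((n choose t) * c)) (hermite_ext t (int n - int t))"
proof (cases "n < t")
  case True
  then show ?thesis by (simp add: binomial_eq_0)
next
  case False
  then show ?thesis by (simp add: hermite_ext_def nat_diff_distrib of_nat_mult_conv_smult)
qed


theorem mainTheorem11:
  fixes t n :: nat
  assumes "t \<ge> 1"
  shows "hermite t (n + 1) =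
           [:0, 1:] * hermite t n
           - smult (of_nat ((n choose t) * (fact (t + 1) div 2))) (hermite_ext t (int n - int t))"
proof -
  have new: "n + 1 \<notin> {1..n}" and ins: "{1..n + 1} = insert (n + 1) {1..n}" by auto
  have "hermite t (n + 1) = hermite_on t (insert (n + 1) {1..n})"
    by (simp only: hermite_eq_hermite_on ins)
  also have "\<dots> = [:0, 1:] * hermite_on t {1..n}
      - of_nat (card {P \<in> paths_on t (insert (n + 1) {1..n}). n + 1 \<in> \<Union>P}) * hermite t (card {1..n} - t)"
    using assms new by (intro hermite_on_insert) auto
  also have "\<dots> = [:0, 1:] * hermite t n
      - of_nat ((n choose t) * (fact (t + 1) div 2)) * hermite t (n - t)"
    using card_paths_through[OF assms _ new] by (simp add: hermite_eq_hermite_on)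
  also have "\<dots> = [:0, 1:] * hermite t n
      - smult (of_nat ((n choose t) * (fact (t + 1) div 2))) (hermite_ext t (int n - int t))"
    by (simp only: smult_hermite_ext)
  finally show ?thesis .
qed

end
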